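(* Let "free" mean any one of the following three notions: detection-incoherent, creation-incoherent, or detection-creation-incoherent. If $\Phi$ and $\Theta$ are free quantum operations, then $\Phi\circ\Theta$ (whenever the output of $\Theta$ matches the input of $\Phi$) and $\Phi\otimes\Theta$ are free as well.
   Context: Every finite-dimensional system carries a fixed orthonormal incoherent basis $\{|i\rangle\}$; composite systems use the product basis. The total dephasing map is $\Delta(\rho)=\sum_i|i\rangle\langle i|\rho|i\rangle\langle i|$, and on composite systems it is the tensor product of the dephasing maps of the subsystems. A quantum operation is a completely positive trace-preserving linear map. A quantum operation $\Phi$ is detection-incoherent iff $\Delta\Phi=\Delta\Phi\Delta$, creation-incoherent iff $\Phi\Delta=\Delta\Phi\Delta$, and detection-creation-incoherent iff $\Delta\Phi=\Phi\Delta$. *)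

theory Defs
  imports "Jordan_Normal_Form.Matrix" Complex_Main
begin

text \<open>Finite-dimensional systems of dimension n: operators are n x n complex matrices,
  the incoherent basis is the standard basis. A composite system of dimensions n1, n2 has
  dimension n1*n2 with product basis index (i,k) |-> i*n2 + k (Kronecker ordering).\<close>

definition mtrace :: "complex mat \<Rightarrow> complex" where
  "mtrace A = (\<Sum>i<dim_row A. A $$ (i,i))"

definition psd :: "nat \<Rightarrow> complex mat \<Rightarrow> bool" where
  "psd n A \<longleftrightarrow> A \<in> carrier_mat n n \<and>
     (\<forall>v \<in> carrier_vec n. scalar_prod (conjugate v) (mult_mat_vec A v) \<in> \<real> \<and> 0 \<le> Re (scalar_prod (conjugate v) (mult_mat_vec A v)))"

definition dephase :: "nat \<Rightarrow> complex mat \<Rightarrow> complex mat" where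
  "dephase n A = mat n n (\<lambda>(i,j). if i = j then A $$ (i,j) else 0)"

definition munit :: "nat \<Rightarrow> nat \<Rightarrow> nat \<Rightarrow> complex mat" where
  "munit n i j = mat n n (\<lambda>(a,b). if a = i \<and> b = j then 1 else 0)"

definition kron :: "complex mat \<Rightarrow> complex mat \<Rightarrow> complex mat" where
  "kron A B = mat (dim_row A * dim_row B) (dim_col A * dim_col B)
     (\<lambda>(i,j). A $$ (i div dim_row B, j div dim_col B) * B $$ (i mod dim_row B, j mod dim_col B))"

text \<open>Tensor product of linear maps Phi : M_n1 -> M_m1 and Theta : M_n2 -> M_m2,
  as the linear map M_(n1*n2) -> M_(m1*m2) determined by
  (Phi (x) Theta)(|i><j| (x) |k><l|) = Phi(|i><j|) (x) Theta(|k><l|).\<close>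
definition map_tensor ::
  "nat \<Rightarrow> nat \<Rightarrow> nat \<Rightarrow> nat \<Rightarrow> (complex mat \<Rightarrow> complex mat) \<Rightarrow> (complex mat \<Rightarrow> complex mat)
     \<Rightarrow> complex mat \<Rightarrow> complex mat" where
  "map_tensor n1 n2 m1 m2 \<Phi> \<Theta> X = mat (m1 * m2) (m1 * m2) (\<lambda>(p,q).
     \<Sum>i<n1. \<Sum>j<n1. \<Sum>k<n2. \<Sum>l<n2.
       X $$ (i * n2 + k, j * n2 + l) * kron (\<Phi> (munit n1 i j)) (\<Theta> (munit n2 k l)) $$ (p,q))"

definition lin_map :: "nat \<Rightarrow> nat \<Rightarrow> (complex mat \<Rightarrow> complex mat) \<Rightarrow> bool" where
  "lin_map n m \<Phi> \<longleftrightarrow>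
     (\<forall>A \<in> carrier_mat n n. \<Phi> A \<in> carrier_mat m m) \<and>
     (\<forall>A \<in> carrier_mat n n. \<forall>B \<in> carrier_mat n n. \<Phi> (A + B) = \<Phi> A + \<Phi> B) \<and>
     (\<forall>A \<in> carrier_mat n n. \<forall>c. \<Phi> (c \<cdot>\<^sub>m A) = c \<cdot>\<^sub>m \<Phi> A)"

definition completely_positive :: "nat \<Rightarrow> nat \<Rightarrow> (complex mat \<Rightarrow> complex mat) \<Rightarrow> bool" where
  "completely_positive n m \<Phi> \<longleftrightarrow>
     (\<forall>k A. psd (k * n) A \<longrightarrow> psd (k * m) (map_tensor k n k m (\<lambda>X. X) \<Phi> A))"

definition trace_preserving :: "nat \<Rightarrow> (complex mat \<Rightarrow> complex mat) \<Rightarrow> bool" where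
  "trace_preserving n \<Phi> \<longleftrightarrow> (\<forall>A \<in> carrier_mat n n. mtrace (\<Phi> A) = mtrace A)"

definition quantum_operation :: "nat \<Rightarrow> nat \<Rightarrow> (complex mat \<Rightarrow> complex mat) \<Rightarrow> bool" where
  "quantum_operation n m \<Phi> \<longleftrightarrow>
     lin_map n m \<Phi> \<and> completely_positive n m \<Phi> \<and> trace_preserving n \<Phi>"

definition detection_incoherent :: "nat \<Rightarrow> nat \<Rightarrow> (complex mat \<Rightarrow> complex mat) \<Rightarrow> bool" where
  "detection_incoherent n m \<Phi> \<longleftrightarrow> quantum_operation n m \<Phi> \<and>
     (\<forall>A \<in> carrier_mat n n. dephase m (\<Phi> A) = dephase m (\<Phi> (dephase n A)))"

definition creation_incoherent :: "nat \<Rightarrow> nat \<Rightarrow> (complex mat \<Rightarrow> complex mat) \<Rightarrow> bool" where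
  "creation_incoherent n m \<Phi> \<longleftrightarrow> quantum_operation n m \<Phi> \<and>
     (\<forall>A \<in> carrier_mat n n. \<Phi> (dephase n A) = dephase m (\<Phi> (dephase n A)))"

definition detection_creation_incoherent :: "nat \<Rightarrow> nat \<Rightarrow> (complex mat \<Rightarrow> complex mat) \<Rightarrow> bool" where
  "detection_creation_incoherent n m \<Phi> \<longleftrightarrow> quantum_operation n m \<Phi> \<and>
     (\<forall>A \<in> carrier_mat n n. dephase m (\<Phi> A) = \<Phi> (dephase n A))"

datatype free_kind = DI | CI | DCI

fun free_op :: "free_kind \<Rightarrow> nat \<Rightarrow> nat \<Rightarrow> (complex mat \<Rightarrow> complex mat) \<Rightarrow> bool" where
  "free_op DI = detection_incoherent"
| "free_op CI = creation_incoherent"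
| "free_op DCI = detection_creation_incoherent"

end

theory Submission
  imports Defs
begin

(*
  Each incoherence condition is an identity between an operation and the dephasing map \<Delta>,
  which is idempotent. For \<Phi> \<circ> \<Theta> it follows by chaining the identities of the two factors,
  and detection-creation incoherence is exactly the conjunction of the other two conditions.
  On the product basis \<Delta> = \<Delta> \<otimes> \<Delta>, so \<Delta> \<circ> (\<Phi> \<otimes> \<Theta>) = (\<Delta> \<circ> \<Phi>) \<otimes> (\<Delta> \<circ> \<Theta>) and
  (\<Phi> \<otimes> \<Theta>) \<circ> \<Delta> = (\<Phi> \<circ> \<Delta>) \<otimes> (\<Theta> \<circ> \<Delta>), and the identities for \<Phi> and \<Theta> give the one for \<Phi> \<otimes> \<Theta>.

  That \<Phi> \<circ> \<Theta> and \<Phi> \<otimes> \<Theta> are again quantum operations is routine except for complete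
  positivity of \<Phi> \<otimes> \<Theta>: up to permutations of the basis, id \<otimes> (\<Phi> \<otimes> \<Theta>) is id \<otimes> \<Phi> applied
  after id \<otimes> \<Theta>, and reindexing rows and columns simultaneously preserves positive
  semidefiniteness.
*)

lemma munit_carrier [simp]: "munit n i j \<in> carrier_mat n n"
  by (simp add: munit_def)

lemma munit_index [simp]: "a < n \<Longrightarrow> b < n \<Longrightarrow> munit n i j $$ (a,b) = (if a = i \<and> b = j then 1 else 0)"
  by (simp add: munit_def)

lemma munit_dim [simp]: "dim_row (munit n i j) = n" "dim_col (munit n i j) = n"
  by (simp_all add: munit_def)

lemma dephase_carrier [simp]: "dephase n A \<in> carrier_mat n n"
  by (simp add: dephase_def)

lemma dephase_dim [simp]: "dim_row (dephase n A) = n" "dim_col (dephase n A) = n"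
  by (simp_all add: dephase_def)

lemma dephase_index [simp]: "p < n \<Longrightarrow> q < n \<Longrightarrow> dephase n A $$ (p,q) = (if p = q then A $$ (p,q) else 0)"
  by (simp add: dephase_def)

lemma dephase_idem [simp]: "dephase n (dephase n A) = dephase n A"
  by (intro eq_matI) auto

lemma dephase_munit: "dephase n (munit n i j) = (if i = j then munit n i j else 0\<^sub>m n n)"
  by (intro eq_matI) auto

lemma lin_map_carrier: "lin_map n m \<Phi> \<Longrightarrow> A \<in> carrier_mat n n \<Longrightarrow> \<Phi> A \<in> carrier_mat m m"
  by (simp add: lin_map_def)

lemma lin_map_zero:
  assumes "lin_map n m \<Phi>"
  shows "\<Phi> (0\<^sub>m n n) = 0\<^sub>m m m"
proof -
  have "\<Phi> (0\<^sub>m n n) = \<Phi> (0 \<cdot>\<^sub>m 0\<^sub>m n n)" by simp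
  also have "\<dots> = 0 \<cdot>\<^sub>m \<Phi> (0\<^sub>m n n)" using assms zero_carrier_mat unfolding lin_map_def by blast
  also have "\<dots> = 0\<^sub>m m m" using lin_map_carrier[OF assms zero_carrier_mat] by (intro eq_matI) auto
  finally show ?thesis .
qed

lemma lin_map_comp: "lin_map n m \<Phi> \<Longrightarrow> lin_map l n \<Theta> \<Longrightarrow> lin_map l m (\<Phi> \<circ> \<Theta>)"
  unfolding lin_map_def by auto

lemma lin_map_dephase: "lin_map n n (dephase n)"
  unfolding lin_map_def by (auto intro!: eq_matI)

(* lin_map only provides binary additivity, so the expansion of \<Phi> X in matrix units is proved
   by induction over the set of entries kept. *)
definition restrict_entries :: "nat \<Rightarrow> (nat \<times> nat) set \<Rightarrow> complex mat \<Rightarrow> complex mat" where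
  "restrict_entries n S X = mat n n (\<lambda>(a,b). if (a,b) \<in> S then X $$ (a,b) else 0)"

lemma lin_map_restrict_entries_index:
  assumes lin: "lin_map n m \<Phi>" and "finite S" "S \<subseteq> {..<n} \<times> {..<n}" and pq: "p < m" "q < m"
  shows "\<Phi> (restrict_entries n S X) $$ (p,q) = (\<Sum>(a,b)\<in>S. X $$ (a,b) * \<Phi> (munit n a b) $$ (p,q))"
  using assms(2,3)
proof (induction S rule: finite_induct)
  case empty
  have "restrict_entries n {} X = 0\<^sub>m n n" by (intro eq_matI) (auto simp: restrict_entries_def)
  then show ?case using lin_map_zero[OF lin] pq by simp
next
  case (insert ab S)
  obtain a b where ab: "ab = (a,b)" "a < n" "b < n" using insert.prems by (cases ab) auto
  have "restrict_entries n (insert ab S) X = restrict_entries n S X + X $$ (a,b) \<cdot>\<^sub>m munit n a b"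
    using insert.hyps ab by (intro eq_matI) (auto simp: restrict_entries_def)
  then have "\<Phi> (restrict_entries n (insert ab S) X) = \<Phi> (restrict_entries n S X) + X $$ (a,b) \<cdot>\<^sub>m \<Phi> (munit n a b)"
    using lin by (simp add: lin_map_def restrict_entries_def)
  moreover have "\<Phi> (restrict_entries n S X) \<in> carrier_mat m m" "\<Phi> (munit n a b) \<in> carrier_mat m m"
    using lin by (simp_all add: lin_map_def restrict_entries_def)
  ultimately show ?case using insert ab pq by simp
qed

lemma lin_map_index_expand:
  assumes "lin_map n m \<Phi>" "X \<in> carrier_mat n n" "p < m" "q < m"
  shows "\<Phi> X $$ (p,q) = (\<Sum>a<n. \<Sum>b<n. X $$ (a,b) * \<Phi> (munit n a b) $$ (p,q))"
proof -
  have "restrict_entries n ({..<n} \<times> {..<n}) X = X"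
    using assms(2) by (intro eq_matI) (auto simp: restrict_entries_def)
  then show ?thesis
    using lin_map_restrict_entries_index[OF assms(1) _ _ assms(3,4), of "{..<n} \<times> {..<n}" X]
    by (simp add: sum.cartesian_product)
qed

subsection \<open>Tensor products\<close>

lemma mixed_radix_less:
  assumes "i < a" "j < b"
  shows "i * b + j < a * (b::nat)"
proof -
  have "i * b + j < Suc i * b" using assms by simp
  also have "\<dots> \<le> a * b" using assms by (intro mult_le_mono1) simp
  finally show ?thesis .
qed

lemma mixed_radix_eq_iff: "j < b \<Longrightarrow> j' < b \<Longrightarrow> i * b + j = i' * b + j' \<longleftrightarrow> i = i' \<and> j = (j'::nat)"
  by (metis div_mult_self3 mod_mult_self3 mod_less div_less add_0_left add.commute
      mult.commute not_less_zero)

lemma mixed_radix_cases: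
  assumes "x < a * (b::nat)"
  obtains i j where "i < a" "j < b" "x = i * b + j"
proof
  have "b > 0" using assms by (cases b) auto
  then show "x div b < a" "x mod b < b" "x = x div b * b + x mod b"
    using assms by (auto simp: less_mult_imp_div_less mult.commute)
qed

lemma sum_mixed_radix: "(\<Sum>x<a * b. f x) = (\<Sum>i<a. \<Sum>j<(b::nat). f (i * b + j))"
proof -
  have "sum f {i*b..<i*b+b} = (\<Sum>j<b. f (i*b+j))" for i
    using sum.shift_bounds_nat_ivl[of f 0 "i*b" b] by (simp add: add.commute lessThan_atLeast0)
  then show ?thesis using sum.nat_group[of f b a] by simp
qed

lemma kron_index:
  assumes "A \<in> carrier_mat r1 c1" "B \<in> carrier_mat r2 c2" "p1 < r1" "q1 < c1" "p2 < r2" "q2 < c2"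
  shows "kron A B $$ (p1 * r2 + p2, q1 * c2 + q2) = A $$ (p1,q1) * B $$ (p2,q2)"
  using assms mixed_radix_less[of p1 r1 p2 r2] mixed_radix_less[of q1 c1 q2 c2] by (simp add: kron_def)

lemma kron_dim [simp]:
  "dim_row (kron A B) = dim_row A * dim_row B" "dim_col (kron A B) = dim_col A * dim_col B"
  by (simp_all add: kron_def)

lemma map_tensor_dim [simp]:
  "dim_row (map_tensor n1 n2 m1 m2 \<Phi> \<Theta> X) = m1 * m2" "dim_col (map_tensor n1 n2 m1 m2 \<Phi> \<Theta> X) = m1 * m2"
  by (simp_all add: map_tensor_def)

lemma map_tensor_index:
  assumes "lin_map n1 m1 \<Phi>" "lin_map n2 m2 \<Theta>" "p1 < m1" "q1 < m1" "p2 < m2" "q2 < m2"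
  shows "map_tensor n1 n2 m1 m2 \<Phi> \<Theta> X $$ (p1 * m2 + p2, q1 * m2 + q2) =
    (\<Sum>i<n1. \<Sum>j<n1. \<Sum>k<n2. \<Sum>l<n2.
      X $$ (i * n2 + k, j * n2 + l) * (\<Phi> (munit n1 i j) $$ (p1,q1) * \<Theta> (munit n2 k l) $$ (p2,q2)))"
  using assms mixed_radix_less[of p1 m1 p2 m2] mixed_radix_less[of q1 m1 q2 m2]
    kron_index[OF lin_map_carrier lin_map_carrier, OF assms(1) _ assms(2)]
  by (simp add: map_tensor_def)

lemma lin_map_map_tensor:
  assumes "lin_map n1 m1 \<Phi>" "lin_map n2 m2 \<Theta>"
  shows "lin_map (n1 * n2) (m1 * m2) (map_tensor n1 n2 m1 m2 \<Phi> \<Theta>)"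
  unfolding lin_map_def
  by (auto intro!: eq_matI simp: map_tensor_def mixed_radix_less distrib_right sum.distrib
      sum_distrib_left mult.assoc)

definition block_mat :: "nat \<Rightarrow> complex mat \<Rightarrow> nat \<Rightarrow> nat \<Rightarrow> complex mat" where
  "block_mat n X i j = mat n n (\<lambda>(a,b). X $$ (i * n + a, j * n + b))"

lemma block_mat_carrier [simp]: "block_mat n X i j \<in> carrier_mat n n"
  by (simp add: block_mat_def)

lemma block_mat_dim [simp]: "dim_row (block_mat n X i j) = n" "dim_col (block_mat n X i j) = n"
  by (simp_all add: block_mat_def)

lemma block_mat_index [simp]: "a < n \<Longrightarrow> b < n \<Longrightarrow> block_mat n X i j $$ (a,b) = X $$ (i * n + a, j * n + b)"
  by (simp add: block_mat_def)

lemma map_tensor_id_index: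
  assumes lin: "lin_map n m \<Phi>" and "i < k" "j < k" "p < m" "q < m"
  shows "map_tensor k n k m (\<lambda>X. X) \<Phi> X $$ (i * m + p, j * m + q) = \<Phi> (block_mat n X i j) $$ (p,q)"
proof -
  let ?S = "\<Sum>a<n. \<Sum>b<n. X $$ (i * n + a, j * n + b) * \<Phi> (munit n a b) $$ (p,q)"
  have "lin_map k k (\<lambda>X. X)" by (simp add: lin_map_def)
  then have "map_tensor k n k m (\<lambda>X. X) \<Phi> X $$ (i * m + p, j * m + q) =
      (\<Sum>i'<k. \<Sum>j'<k. \<Sum>a<n. \<Sum>b<n.
        X $$ (i' * n + a, j' * n + b) * (munit k i' j' $$ (i,j) * \<Phi> (munit n a b) $$ (p,q)))"
    using assms by (rule map_tensor_index)
  also have "\<dots> = (\<Sum>i'<k. \<Sum>j'<k. if i' = i \<and> j' = j then ?S else 0)"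
    using assms by (intro sum.cong refl) auto
  also have "\<dots> = ?S"
  proof -
    have "(\<Sum>j'<k. if i' = i \<and> j' = j then ?S else 0) = (if i' = i then ?S else 0)" for i'
      using assms by (auto simp: sum.delta)
    then show ?thesis using assms by (simp add: sum.delta)
  qed
  also have "?S = \<Phi> (block_mat n X i j) $$ (p,q)"
    using lin_map_index_expand[OF lin block_mat_carrier assms(4,5)] by simp
  finally show ?thesis .
qed

lemma map_tensor_id_comp:
  assumes l1: "lin_map n m \<Phi>" and l2: "lin_map l n \<Theta>"
  shows "map_tensor k l k m (\<lambda>X. X) (\<Phi> \<circ> \<Theta>) X =
    map_tensor k n k m (\<lambda>X. X) \<Phi> (map_tensor k l k n (\<lambda>X. X) \<Theta> X)"
proof (rule eq_matI)
  fix x y assume "x < dim_row (map_tensor k n k m (\<lambda>X. X) \<Phi> (map_tensor k l k n (\<lambda>X. X) \<Theta> X))"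
    and "y < dim_col (map_tensor k n k m (\<lambda>X. X) \<Phi> (map_tensor k l k n (\<lambda>X. X) \<Theta> X))"
  then obtain i p j q where ip: "i < k" "p < m" "x = i * m + p" and jq: "j < k" "q < m" "y = j * m + q"
    by (auto simp: map_tensor_def elim!: mixed_radix_cases)
  have "block_mat n (map_tensor k l k n (\<lambda>X. X) \<Theta> X) i j = \<Theta> (block_mat l X i j)"
    using lin_map_carrier[OF l2 block_mat_carrier, of X i j]
    by (intro eq_matI) (auto simp: map_tensor_id_index[OF l2 ip(1) jq(1)])
  then show "map_tensor k l k m (\<lambda>X. X) (\<Phi> \<circ> \<Theta>) X $$ (x, y) =
      map_tensor k n k m (\<lambda>X. X) \<Phi> (map_tensor k l k n (\<lambda>X. X) \<Theta> X) $$ (x, y)"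
    unfolding ip(3) jq(3) map_tensor_id_index[OF l1 ip(1) jq(1) ip(2) jq(2)]
      map_tensor_id_index[OF lin_map_comp[OF l1 l2] ip(1) jq(1) ip(2) jq(2)]
    by simp
qed (simp_all add: map_tensor_def)

lemma completely_positive_comp:
  assumes "lin_map n m \<Phi>" "lin_map l n \<Theta>" "completely_positive n m \<Phi>" "completely_positive l n \<Theta>"
  shows "completely_positive l m (\<Phi> \<circ> \<Theta>)"
  using assms unfolding completely_positive_def map_tensor_id_comp[OF assms(1,2)] by blast

lemma quantum_operation_comp:
  assumes "quantum_operation n m \<Phi>" "quantum_operation l n \<Theta>"
  shows "quantum_operation l m (\<Phi> \<circ> \<Theta>)"
  using assms lin_map_comp completely_positive_comp lin_map_carrier
  unfolding quantum_operation_def trace_preserving_def by (metis comp_apply)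

lemma mtrace_munit:
  assumes "i < n" "j < n"
  shows "mtrace (munit n i j) = (if i = j then 1 else 0)"
proof (cases "i = j")
  case True
  then show ?thesis using assms by (simp add: mtrace_def sum.delta)
next
  case False
  then show ?thesis using assms by (auto simp: mtrace_def intro!: sum.neutral)
qed

lemma mtrace_kron:
  assumes "A \<in> carrier_mat m1 m1" "B \<in> carrier_mat m2 m2"
  shows "mtrace (kron A B) = mtrace A * mtrace B"
proof -
  have "mtrace (kron A B) = (\<Sum>p<m1. \<Sum>r<m2. kron A B $$ (p * m2 + r, p * m2 + r))"
    using assms by (simp add: mtrace_def sum_mixed_radix)
  also have "\<dots> = (\<Sum>p<m1. \<Sum>r<m2. A $$ (p,p) * B $$ (r,r))"
    using assms by (intro sum.cong refl) (simp add: kron_index)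
  finally show ?thesis
    using assms by (simp add: mtrace_def sum_product)
qed

lemma mtrace_map_tensor:
  assumes l1: "lin_map n1 m1 \<Phi>" and l2: "lin_map n2 m2 \<Theta>"
  shows "mtrace (map_tensor n1 n2 m1 m2 \<Phi> \<Theta> X) = (\<Sum>i<n1. \<Sum>j<n1. \<Sum>k<n2. \<Sum>l<n2.
    X $$ (i * n2 + k, j * n2 + l) * (mtrace (\<Phi> (munit n1 i j)) * mtrace (\<Theta> (munit n2 k l))))"
proof -
  have "mtrace (map_tensor n1 n2 m1 m2 \<Phi> \<Theta> X) = (\<Sum>x<m1 * m2. \<Sum>i<n1. \<Sum>j<n1. \<Sum>k<n2. \<Sum>l<n2.
      X $$ (i * n2 + k, j * n2 + l) * kron (\<Phi> (munit n1 i j)) (\<Theta> (munit n2 k l)) $$ (x,x))"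
    by (simp add: mtrace_def map_tensor_def)
  also have "\<dots> = (\<Sum>i<n1. \<Sum>j<n1. \<Sum>k<n2. \<Sum>l<n2. \<Sum>x<m1 * m2.
      X $$ (i * n2 + k, j * n2 + l) * kron (\<Phi> (munit n1 i j)) (\<Theta> (munit n2 k l)) $$ (x,x))"
    by (simp only: sum.swap[of _ "{..<m1 * m2}"])
  also have "\<dots> = (\<Sum>i<n1. \<Sum>j<n1. \<Sum>k<n2. \<Sum>l<n2.
      X $$ (i * n2 + k, j * n2 + l) * mtrace (kron (\<Phi> (munit n1 i j)) (\<Theta> (munit n2 k l))))"
    by (simp add: mtrace_def sum_distrib_left carrier_matD[OF lin_map_carrier[OF l1 munit_carrier]]
        carrier_matD[OF lin_map_carrier[OF l2 munit_carrier]])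
  finally show ?thesis
    by (simp add: mtrace_kron[OF lin_map_carrier[OF l1 munit_carrier] lin_map_carrier[OF l2 munit_carrier]])
qed

lemma trace_preserving_map_tensor:
  assumes l1: "lin_map n1 m1 \<Phi>" and l2: "lin_map n2 m2 \<Theta>"
    and "trace_preserving n1 \<Phi>" "trace_preserving n2 \<Theta>"
  shows "trace_preserving (n1 * n2) (map_tensor n1 n2 m1 m2 \<Phi> \<Theta>)"
  unfolding trace_preserving_def
proof
  fix X :: "complex mat" assume X: "X \<in> carrier_mat (n1 * n2) (n1 * n2)"
  have diag: "(\<Sum>j<n1. \<Sum>k<n2. \<Sum>l<n2. X $$ (i * n2 + k, j * n2 + l) *
      ((if i = j then 1 else 0) * (if k = l then 1 else 0))) = (\<Sum>k<n2. X $$ (i * n2 + k, i * n2 + k))"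
    if "i < n1" for i
  proof -
    have "(\<Sum>k<n2. \<Sum>l<n2. X $$ (i * n2 + k, j * n2 + l) * ((if i = j then 1 else 0) * (if k = l then 1 else 0)))
        = (if j = i then (\<Sum>k<n2. X $$ (i * n2 + k, i * n2 + k)) else 0)" for j
      by (cases "j = i") (simp_all add: if_distrib[of "\<lambda>x. _ * x"] sum.delta' cong: if_cong)
    then show ?thesis using that by (simp add: sum.delta)
  qed
  have "mtrace (map_tensor n1 n2 m1 m2 \<Phi> \<Theta> X) = (\<Sum>i<n1. \<Sum>j<n1. \<Sum>k<n2. \<Sum>l<n2.
      X $$ (i * n2 + k, j * n2 + l) * ((if i = j then 1 else 0) * (if k = l then 1 else 0)))"
    using assms(3,4) unfolding mtrace_map_tensor[OF l1 l2] trace_preserving_def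
    by (intro sum.cong refl) (simp add: mtrace_munit)
  also have "\<dots> = (\<Sum>i<n1. \<Sum>k<n2. X $$ (i * n2 + k, i * n2 + k))"
    by (rule sum.cong[OF refl]) (simp add: diag)
  also have "\<dots> = mtrace X"
    using X by (simp add: mtrace_def sum_mixed_radix)
  finally show "mtrace (map_tensor n1 n2 m1 m2 \<Phi> \<Theta> X) = mtrace X" .
qed

subsection \<open>Complete positivity of tensor products\<close>

definition reindex_mat :: "nat \<Rightarrow> (nat \<Rightarrow> nat) \<Rightarrow> complex mat \<Rightarrow> complex mat" where
  "reindex_mat N \<sigma> A = mat N N (\<lambda>(x,y). A $$ (\<sigma> x, \<sigma> y))"

lemma sum_fibers_mult:
  fixes N' :: nat
  assumes "\<forall>x<N'. \<sigma> x < (N::nat)"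
  shows "(\<Sum>u<N. (\<Sum>x | x < N' \<and> \<sigma> x = u. f x) * h u) = (\<Sum>x<N'. f x * (h (\<sigma> x) :: complex))"
proof -
  have "(\<Sum>u<N. (\<Sum>x | x < N' \<and> \<sigma> x = u. f x) * h u) = (\<Sum>u<N. \<Sum>x\<in>{x \<in> {..<N'}. \<sigma> x = u}. f x * h (\<sigma> x))"
    unfolding sum_distrib_right by (intro sum.cong) auto
  also have "\<dots> = (\<Sum>x<N'. f x * h (\<sigma> x))"
    using assms by (intro sum.group) auto
  finally show ?thesis .
qed

lemma quadratic_form_reindex_mat:
  assumes A: "A \<in> carrier_mat N N" and \<sigma>: "\<forall>x<N'. \<sigma> x < N" and v: "v \<in> carrier_vec N'"
  defines "w \<equiv> vec N (\<lambda>u. \<Sum>x | x < N' \<and> \<sigma> x = u. v $ x)"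
  shows "conjugate v \<bullet> (reindex_mat N' \<sigma> A *\<^sub>v v) = conjugate w \<bullet> (A *\<^sub>v w)"
proof -
  have Aw: "(A *\<^sub>v w) $ u = (\<Sum>y<N'. A $$ (u, \<sigma> y) * v $ y)" if "u < N" for u
  proof -
    have "(A *\<^sub>v w) $ u = (\<Sum>u'<N. (\<Sum>y | y < N' \<and> \<sigma> y = u'. v $ y) * A $$ (u,u'))"
      using A that by (simp add: w_def scalar_prod_def lessThan_atLeast0 mult.commute)
    also have "\<dots> = (\<Sum>y<N'. v $ y * A $$ (u, \<sigma> y))" by (rule sum_fibers_mult[OF \<sigma>])
    finally show ?thesis by (simp add: mult.commute)
  qed
  have "conjugate w \<bullet> (A *\<^sub>v w) = (\<Sum>u<N. conjugate (w $ u) * (A *\<^sub>v w) $ u)"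
    using A by (simp add: w_def scalar_prod_def lessThan_atLeast0)
  also have "\<dots> =
      (\<Sum>u<N. (\<Sum>x | x < N' \<and> \<sigma> x = u. conjugate (v $ x)) * (\<Sum>y<N'. A $$ (u, \<sigma> y) * v $ y))"
    by (intro sum.cong refl) (simp add: Aw, simp add: w_def sum_conjugate)
  also have "\<dots> = (\<Sum>x<N'. conjugate (v $ x) * (\<Sum>y<N'. A $$ (\<sigma> x, \<sigma> y) * v $ y))"
    by (rule sum_fibers_mult[OF \<sigma>])
  also have "\<dots> = conjugate v \<bullet> (reindex_mat N' \<sigma> A *\<^sub>v v)"
    using v \<sigma> by (simp add: reindex_mat_def scalar_prod_def lessThan_atLeast0)
  finally show ?thesis by simp
qed

lemma psd_reindex_mat:
  assumes A: "psd N A" and \<sigma>: "\<forall>x<N'. \<sigma> x < N"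
  shows "psd N' (reindex_mat N' \<sigma> A)"
  using A quadratic_form_reindex_mat[OF _ \<sigma>] unfolding psd_def
  by (simp add: reindex_mat_def)

definition swap_digits :: "nat \<Rightarrow> nat \<Rightarrow> nat \<Rightarrow> nat" where
  "swap_digits b c x = ((x div c div b) * c + x mod c) * b + (x div c) mod b"

lemma swap_digits_mixed_radix:
  "u < b \<Longrightarrow> v < c \<Longrightarrow> swap_digits b c ((i * b + u) * c + v) = (i * c + v) * b + u"
  by (simp add: swap_digits_def)

lemma swap_digits_less:
  assumes "x < k * b * c"
  shows "swap_digits b c x < k * c * b"
proof -
  obtain i u v where "i < k" "u < b" "v < c" "x = (i * b + u) * c + v"
    using assms by (metis mixed_radix_cases)
  then show ?thesis by (simp add: swap_digits_mixed_radix mixed_radix_less)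
qed

lemma map_tensor_id_map_tensor:
  assumes l1: "lin_map n1 m1 \<Phi>" and l2: "lin_map n2 m2 \<Theta>"
  shows "map_tensor k (n1 * n2) k (m1 * m2) (\<lambda>X. X) (map_tensor n1 n2 m1 m2 \<Phi> \<Theta>) X =
    reindex_mat (k * m1 * m2) (swap_digits m1 m2)
      (map_tensor (k * m2) n1 (k * m2) m1 (\<lambda>X. X) \<Phi>
        (reindex_mat (k * m2 * n1) (swap_digits m2 n1) (map_tensor (k * n1) n2 (k * n1) m2 (\<lambda>X. X) \<Theta> X)))"
    (is "?L = ?R")
proof (rule eq_matI)
  let ?Z = "reindex_mat (k * m2 * n1) (swap_digits m2 n1) (map_tensor (k * n1) n2 (k * n1) m2 (\<lambda>X. X) \<Theta> X)"
  fix x y assume "x < dim_row ?R" "y < dim_col ?R"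
  then obtain i p r j q s where ipr: "i < k" "p < m1" "r < m2" "x = (i * m1 + p) * m2 + r"
    and jqs: "j < k" "q < m1" "s < m2" "y = (j * m1 + q) * m2 + s"
    by (simp add: reindex_mat_def) (metis mixed_radix_cases)
  have irs: "i * m2 + r < k * m2" "j * m2 + s < k * m2"
    using ipr jqs by (simp_all add: mixed_radix_less)
  have Z_block: "block_mat n1 ?Z (i * m2 + r) (j * m2 + s) $$ (a,b) =
      (\<Sum>c<n2. \<Sum>d<n2. X $$ ((i * n1 + a) * n2 + c, (j * n1 + b) * n2 + d) * \<Theta> (munit n2 c d) $$ (r,s))"
    if ab: "a < n1" "b < n1" for a b
  proof -
    have "i * n1 + a < k * n1" "j * n1 + b < k * n1" using ipr jqs ab by (simp_all add: mixed_radix_less)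
    moreover have "(i * m2 + r) * n1 + a < k * m2 * n1" "(j * m2 + s) * n1 + b < k * m2 * n1"
      using irs ab by (simp_all add: mixed_radix_less)
    ultimately show ?thesis
      using ipr jqs ab by (simp add: reindex_mat_def swap_digits_mixed_radix map_tensor_id_index[OF l2]
          lin_map_index_expand[OF l2 block_mat_carrier])
  qed
  have "?R $$ (x,y) = \<Phi> (block_mat n1 ?Z (i * m2 + r) (j * m2 + s)) $$ (p,q)"
    using ipr jqs mixed_radix_less[OF ipr(1,2)] mixed_radix_less[OF jqs(1,2)]
    by (simp add: reindex_mat_def swap_digits_mixed_radix map_tensor_id_index[OF l1 irs] mixed_radix_less)
  also have "\<dots> = (\<Sum>a<n1. \<Sum>b<n1. \<Sum>c<n2. \<Sum>d<n2.
      X $$ (i * (n1 * n2) + (a * n2 + c), j * (n1 * n2) + (b * n2 + d)) *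
      (\<Phi> (munit n1 a b) $$ (p,q) * \<Theta> (munit n2 c d) $$ (r,s)))"
    unfolding lin_map_index_expand[OF l1 block_mat_carrier ipr(2) jqs(2)]
    by (intro sum.cong refl) (subst Z_block; simp add: sum_distrib_left sum_distrib_right algebra_simps)
  also have "\<dots> = map_tensor n1 n2 m1 m2 \<Phi> \<Theta> (block_mat (n1 * n2) X i j) $$ (p * m2 + r, q * m2 + s)"
    by (simp add: map_tensor_index[OF l1 l2 ipr(2) jqs(2) ipr(3) jqs(3)] mixed_radix_less)
  also have "\<dots> = ?L $$ (x,y)"
    using map_tensor_id_index[OF lin_map_map_tensor[OF l1 l2] ipr(1) jqs(1)
        mixed_radix_less[OF ipr(2,3)] mixed_radix_less[OF jqs(2,3)]]
    by (simp add: ipr(4) jqs(4) algebra_simps)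
  finally show "?L $$ (x,y) = ?R $$ (x,y)"
    by simp
qed (simp_all add: reindex_mat_def map_tensor_def mult.assoc)

lemma completely_positive_map_tensor:
  assumes "lin_map n1 m1 \<Phi>" "lin_map n2 m2 \<Theta>" "completely_positive n1 m1 \<Phi>" "completely_positive n2 m2 \<Theta>"
  shows "completely_positive (n1 * n2) (m1 * m2) (map_tensor n1 n2 m1 m2 \<Phi> \<Theta>)"
  unfolding completely_positive_def
proof (intro allI impI)
  fix k X assume "psd (k * (n1 * n2)) X"
  define Y where "Y = map_tensor (k * n1) n2 (k * n1) m2 (\<lambda>X. X) \<Theta> X"
  define Z where "Z = reindex_mat (k * m2 * n1) (swap_digits m2 n1) Y"
  define W where "W = map_tensor (k * m2) n1 (k * m2) m1 (\<lambda>X. X) \<Phi> Z"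
  have "psd (k * n1 * m2) Y"
    using assms(4) \<open>psd (k * (n1 * n2)) X\<close> unfolding completely_positive_def Y_def
    by (metis mult.assoc)
  then have "psd (k * m2 * n1) Z"
    unfolding Z_def by (rule psd_reindex_mat) (metis swap_digits_less)
  then have "psd (k * m2 * m1) W"
    using assms(3) unfolding completely_positive_def W_def by blast
  then have "psd (k * m1 * m2) (reindex_mat (k * m1 * m2) (swap_digits m1 m2) W)"
    by (rule psd_reindex_mat) (metis swap_digits_less)
  then show "psd (k * (m1 * m2)) (map_tensor k (n1 * n2) k (m1 * m2) (\<lambda>X. X) (map_tensor n1 n2 m1 m2 \<Phi> \<Theta>) X)"
    by (simp add: map_tensor_id_map_tensor[OF assms(1,2)] W_def Z_def Y_def mult.assoc)
qed

lemma quantum_operation_map_tensor: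
  assumes "quantum_operation n1 m1 \<Phi>" "quantum_operation n2 m2 \<Theta>"
  shows "quantum_operation (n1 * n2) (m1 * m2) (map_tensor n1 n2 m1 m2 \<Phi> \<Theta>)"
  using assms lin_map_map_tensor completely_positive_map_tensor trace_preserving_map_tensor
  unfolding quantum_operation_def by blast

subsection \<open>Dephasing and tensor products\<close>

lemma map_tensor_cong:
  assumes "\<And>A. A \<in> carrier_mat n1 n1 \<Longrightarrow> \<Phi> A = \<Phi>' A" "\<And>B. B \<in> carrier_mat n2 n2 \<Longrightarrow> \<Theta> B = \<Theta>' B"
  shows "map_tensor n1 n2 m1 m2 \<Phi> \<Theta> = map_tensor n1 n2 m1 m2 \<Phi>' \<Theta>'"
  using assms by (simp add: map_tensor_def fun_eq_iff)

lemma map_tensor_dephase: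
  assumes l1: "lin_map n1 m1 \<Phi>" and l2: "lin_map n2 m2 \<Theta>"
  shows "map_tensor n1 n2 m1 m2 \<Phi> \<Theta> (dephase (n1 * n2) X) =
    map_tensor n1 n2 m1 m2 (\<Phi> \<circ> dephase n1) (\<Theta> \<circ> dephase n2) X"
proof (rule eq_matI)
  fix x y assume "x < dim_row (map_tensor n1 n2 m1 m2 (\<Phi> \<circ> dephase n1) (\<Theta> \<circ> dephase n2) X)"
    and "y < dim_col (map_tensor n1 n2 m1 m2 (\<Phi> \<circ> dephase n1) (\<Theta> \<circ> dephase n2) X)"
  then obtain p r q s where pr: "p < m1" "r < m2" "x = p * m2 + r" and qs: "q < m1" "s < m2" "y = q * m2 + s"
    by (simp add: map_tensor_def) (metis mixed_radix_cases)
  have l1': "lin_map n1 m1 (\<Phi> \<circ> dephase n1)" and l2': "lin_map n2 m2 (\<Theta> \<circ> dephase n2)"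
    using lin_map_comp lin_map_dephase l1 l2 by blast+
  show "map_tensor n1 n2 m1 m2 \<Phi> \<Theta> (dephase (n1 * n2) X) $$ (x,y) =
      map_tensor n1 n2 m1 m2 (\<Phi> \<circ> dephase n1) (\<Theta> \<circ> dephase n2) X $$ (x,y)"
    unfolding pr(3) qs(3) map_tensor_index[OF l1 l2 pr(1) qs(1) pr(2) qs(2)]
      map_tensor_index[OF l1' l2' pr(1) qs(1) pr(2) qs(2)]
    using pr qs
    by (intro sum.cong refl)
      (auto simp: dephase_munit lin_map_zero[OF l1] lin_map_zero[OF l2] mixed_radix_less mixed_radix_eq_iff)
qed simp_all

lemma dephase_kron:
  assumes "A \<in> carrier_mat m1 m1" "B \<in> carrier_mat m2 m2"
  shows "dephase (m1 * m2) (kron A B) = kron (dephase m1 A) (dephase m2 B)"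
proof (rule eq_matI)
  fix x y assume "x < dim_row (kron (dephase m1 A) (dephase m2 B))" "y < dim_col (kron (dephase m1 A) (dephase m2 B))"
  then obtain p r q s where "p < m1" "r < m2" "x = p * m2 + r" "q < m1" "s < m2" "y = q * m2 + s"
    by simp (metis mixed_radix_cases)
  then show "dephase (m1 * m2) (kron A B) $$ (x,y) = kron (dephase m1 A) (dephase m2 B) $$ (x,y)"
    using assms by (simp add: kron_index[OF assms] kron_index[OF dephase_carrier dephase_carrier]
        mixed_radix_less mixed_radix_eq_iff)
qed simp_all

lemma dephase_map_tensor:
  assumes l1: "lin_map n1 m1 \<Phi>" and l2: "lin_map n2 m2 \<Theta>"
  shows "dephase (m1 * m2) (map_tensor n1 n2 m1 m2 \<Phi> \<Theta> X) =
    map_tensor n1 n2 m1 m2 (dephase m1 \<circ> \<Phi>) (dephase m2 \<circ> \<Theta>) X"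
proof (rule eq_matI)
  fix x y assume "x < dim_row (map_tensor n1 n2 m1 m2 (dephase m1 \<circ> \<Phi>) (dephase m2 \<circ> \<Theta>) X)"
    and "y < dim_col (map_tensor n1 n2 m1 m2 (dephase m1 \<circ> \<Phi>) (dephase m2 \<circ> \<Theta>) X)"
  then have "x < m1 * m2" "y < m1 * m2" by (simp_all add: map_tensor_def)
  then show "dephase (m1 * m2) (map_tensor n1 n2 m1 m2 \<Phi> \<Theta> X) $$ (x,y) =
      map_tensor n1 n2 m1 m2 (dephase m1 \<circ> \<Phi>) (dephase m2 \<circ> \<Theta>) X $$ (x,y)"
    by (simp add: map_tensor_def dephase_kron[OF lin_map_carrier[OF l1 munit_carrier] lin_map_carrier[OF l2 munit_carrier], symmetric])
qed simp_all

subsection \<open>Incoherent operations\<close>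

lemma detection_creation_incoherent_iff:
  "detection_creation_incoherent n m \<Phi> \<longleftrightarrow> detection_incoherent n m \<Phi> \<and> creation_incoherent n m \<Phi>"
proof -
  have "(\<forall>A \<in> carrier_mat n n. dephase m (\<Phi> A) = \<Phi> (dephase n A)) \<longleftrightarrow>
      (\<forall>A \<in> carrier_mat n n. dephase m (\<Phi> A) = dephase m (\<Phi> (dephase n A))) \<and>
      (\<forall>A \<in> carrier_mat n n. \<Phi> (dephase n A) = dephase m (\<Phi> (dephase n A)))"
  proof (intro iffI conjI ballI)
    fix A :: "complex mat" assume A: "A \<in> carrier_mat n n"
    assume dci: "\<forall>A \<in> carrier_mat n n. dephase m (\<Phi> A) = \<Phi> (dephase n A)"
    have "dephase m (\<Phi> (dephase n A)) = \<Phi> (dephase n (dephase n A))"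
      using dci by simp
    then show ci: "\<Phi> (dephase n A) = dephase m (\<Phi> (dephase n A))" by simp
    show "dephase m (\<Phi> A) = dephase m (\<Phi> (dephase n A))"
      using dci A by (simp only: ci[symmetric])
  next
    fix A :: "complex mat" assume A: "A \<in> carrier_mat n n"
    assume "(\<forall>A \<in> carrier_mat n n. dephase m (\<Phi> A) = dephase m (\<Phi> (dephase n A))) \<and>
      (\<forall>A \<in> carrier_mat n n. \<Phi> (dephase n A) = dephase m (\<Phi> (dephase n A)))"
    then have "dephase m (\<Phi> A) = dephase m (\<Phi> (dephase n A))" "\<Phi> (dephase n A) = dephase m (\<Phi> (dephase n A))"
      using A by blast+
    then show "dephase m (\<Phi> A) = \<Phi> (dephase n A)" by metis
  qed
  then show ?thesis
    unfolding detection_creation_incoherent_def detection_incoherent_def creation_incoherent_def by blast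
qed

(* The equations are oriented to remove a dephasing when used for rewriting; the defining
   equations, read left to right, make the simplifier loop. *)
lemma detection_incoherentI:
  "quantum_operation n m \<Phi> \<Longrightarrow>
    (\<And>A. A \<in> carrier_mat n n \<Longrightarrow> dephase m (\<Phi> (dephase n A)) = dephase m (\<Phi> A)) \<Longrightarrow>
    detection_incoherent n m \<Phi>"
  by (simp add: detection_incoherent_def)

lemma creation_incoherentI:
  "quantum_operation n m \<Phi> \<Longrightarrow>
    (\<And>A. A \<in> carrier_mat n n \<Longrightarrow> dephase m (\<Phi> (dephase n A)) = \<Phi> (dephase n A)) \<Longrightarrow>
    creation_incoherent n m \<Phi>"
  by (simp add: creation_incoherent_def)

lemma detection_incoherent_quantum_operation: "detection_incoherent n m \<Phi> \<Longrightarrow> quantum_operation n m \<Phi>"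
  unfolding detection_incoherent_def by (erule conjunct1)

lemma creation_incoherent_quantum_operation: "creation_incoherent n m \<Phi> \<Longrightarrow> quantum_operation n m \<Phi>"
  unfolding creation_incoherent_def by (erule conjunct1)

lemma detection_incoherentD:
  "detection_incoherent n m \<Phi> \<Longrightarrow> A \<in> carrier_mat n n \<Longrightarrow> dephase m (\<Phi> (dephase n A)) = dephase m (\<Phi> A)"
  unfolding detection_incoherent_def by (blast intro: sym)

lemma creation_incoherentD:
  "creation_incoherent n m \<Phi> \<Longrightarrow> A \<in> carrier_mat n n \<Longrightarrow> dephase m (\<Phi> (dephase n A)) = \<Phi> (dephase n A)"
  unfolding creation_incoherent_def by (blast intro: sym)

lemma detection_incoherent_comp:
  assumes \<Phi>: "detection_incoherent n m \<Phi>" and \<Theta>: "detection_incoherent l n \<Theta>"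
  shows "detection_incoherent l m (\<Phi> \<circ> \<Theta>)"
proof (rule detection_incoherentI)
  have q: "quantum_operation n m \<Phi>" "quantum_operation l n \<Theta>"
    using assms by (simp_all add: detection_incoherent_quantum_operation)
  then show "quantum_operation l m (\<Phi> \<circ> \<Theta>)" by (rule quantum_operation_comp)
  fix A :: "complex mat" assume A: "A \<in> carrier_mat l l"
  have "lin_map l n \<Theta>" using q(2) by (simp add: quantum_operation_def)
  then have carrier: "\<Theta> A \<in> carrier_mat n n" "\<Theta> (dephase l A) \<in> carrier_mat n n"
    using A by (simp_all add: lin_map_carrier)
  have "dephase m (\<Phi> (\<Theta> (dephase l A))) = dephase m (\<Phi> (dephase n (\<Theta> (dephase l A))))"
    by (rule detection_incoherentD[OF \<Phi> carrier(2), symmetric])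
  also have "\<dots> = dephase m (\<Phi> (dephase n (\<Theta> A)))"
    by (simp only: detection_incoherentD[OF \<Theta> A])
  also have "\<dots> = dephase m (\<Phi> (\<Theta> A))"
    by (rule detection_incoherentD[OF \<Phi> carrier(1)])
  finally show "dephase m ((\<Phi> \<circ> \<Theta>) (dephase l A)) = dephase m ((\<Phi> \<circ> \<Theta>) A)"
    by simp
qed

lemma creation_incoherent_comp:
  assumes \<Phi>: "creation_incoherent n m \<Phi>" and \<Theta>: "creation_incoherent l n \<Theta>"
  shows "creation_incoherent l m (\<Phi> \<circ> \<Theta>)"
proof (rule creation_incoherentI)
  have q: "quantum_operation n m \<Phi>" "quantum_operation l n \<Theta>"
    using assms by (simp_all add: creation_incoherent_quantum_operation)
  then show "quantum_operation l m (\<Phi> \<circ> \<Theta>)" by (rule quantum_operation_comp)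
  fix A :: "complex mat" assume A: "A \<in> carrier_mat l l"
  have "lin_map l n \<Theta>" using q(2) by (simp add: quantum_operation_def)
  then have "\<Theta> (dephase l A) \<in> carrier_mat n n" by (simp add: lin_map_carrier)
  then have "dephase m (\<Phi> (dephase n (\<Theta> (dephase l A)))) = \<Phi> (dephase n (\<Theta> (dephase l A)))"
    by (rule creation_incoherentD[OF \<Phi>])
  then show "dephase m ((\<Phi> \<circ> \<Theta>) (dephase l A)) = (\<Phi> \<circ> \<Theta>) (dephase l A)"
    by (simp only: creation_incoherentD[OF \<Theta> A] comp_apply)
qed

lemma detection_incoherent_map_tensor:
  assumes \<Phi>: "detection_incoherent n1 m1 \<Phi>" and \<Theta>: "detection_incoherent n2 m2 \<Theta>"
  shows "detection_incoherent (n1 * n2) (m1 * m2) (map_tensor n1 n2 m1 m2 \<Phi> \<Theta>)"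
proof (rule detection_incoherentI)
  have q: "quantum_operation n1 m1 \<Phi>" "quantum_operation n2 m2 \<Theta>"
    using assms by (simp_all add: detection_incoherent_quantum_operation)
  then show "quantum_operation (n1 * n2) (m1 * m2) (map_tensor n1 n2 m1 m2 \<Phi> \<Theta>)"
    by (rule quantum_operation_map_tensor)
  have l: "lin_map n1 m1 \<Phi>" "lin_map n2 m2 \<Theta>"
    using q by (simp_all add: quantum_operation_def)
  then have l': "lin_map n1 m1 (dephase m1 \<circ> \<Phi>)" "lin_map n2 m2 (dephase m2 \<circ> \<Theta>)"
    using lin_map_comp lin_map_dephase by blast+
  fix A :: "complex mat"
  have "dephase (m1 * m2) (map_tensor n1 n2 m1 m2 \<Phi> \<Theta> (dephase (n1 * n2) A)) =
      map_tensor n1 n2 m1 m2 (dephase m1 \<circ> \<Phi>) (dephase m2 \<circ> \<Theta>) (dephase (n1 * n2) A)"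
    by (rule dephase_map_tensor[OF l])
  also have "\<dots> = map_tensor n1 n2 m1 m2 (dephase m1 \<circ> \<Phi> \<circ> dephase n1) (dephase m2 \<circ> \<Theta> \<circ> dephase n2) A"
    by (rule map_tensor_dephase[OF l'])
  also have "\<dots> = map_tensor n1 n2 m1 m2 (dephase m1 \<circ> \<Phi>) (dephase m2 \<circ> \<Theta>) A"
    by (rule fun_cong[OF map_tensor_cong])
      (simp_all add: detection_incoherentD[OF \<Phi>] detection_incoherentD[OF \<Theta>])
  also have "\<dots> = dephase (m1 * m2) (map_tensor n1 n2 m1 m2 \<Phi> \<Theta> A)"
    by (rule dephase_map_tensor[OF l, symmetric])
  finally show "dephase (m1 * m2) (map_tensor n1 n2 m1 m2 \<Phi> \<Theta> (dephase (n1 * n2) A)) =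
      dephase (m1 * m2) (map_tensor n1 n2 m1 m2 \<Phi> \<Theta> A)" .
qed

lemma creation_incoherent_map_tensor:
  assumes \<Phi>: "creation_incoherent n1 m1 \<Phi>" and \<Theta>: "creation_incoherent n2 m2 \<Theta>"
  shows "creation_incoherent (n1 * n2) (m1 * m2) (map_tensor n1 n2 m1 m2 \<Phi> \<Theta>)"
proof (rule creation_incoherentI)
  have q: "quantum_operation n1 m1 \<Phi>" "quantum_operation n2 m2 \<Theta>"
    using assms by (simp_all add: creation_incoherent_quantum_operation)
  then show "quantum_operation (n1 * n2) (m1 * m2) (map_tensor n1 n2 m1 m2 \<Phi> \<Theta>)"
    by (rule quantum_operation_map_tensor)
  have l: "lin_map n1 m1 \<Phi>" "lin_map n2 m2 \<Theta>"
    using q by (simp_all add: quantum_operation_def)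
  then have l': "lin_map n1 m1 (\<Phi> \<circ> dephase n1)" "lin_map n2 m2 (\<Theta> \<circ> dephase n2)"
    using lin_map_comp lin_map_dephase by blast+
  fix A :: "complex mat"
  have "dephase (m1 * m2) (map_tensor n1 n2 m1 m2 \<Phi> \<Theta> (dephase (n1 * n2) A)) =
      dephase (m1 * m2) (map_tensor n1 n2 m1 m2 (\<Phi> \<circ> dephase n1) (\<Theta> \<circ> dephase n2) A)"
    by (simp only: map_tensor_dephase[OF l])
  also have "\<dots> = map_tensor n1 n2 m1 m2 (dephase m1 \<circ> (\<Phi> \<circ> dephase n1)) (dephase m2 \<circ> (\<Theta> \<circ> dephase n2)) A"
    by (rule dephase_map_tensor[OF l'])
  also have "\<dots> = map_tensor n1 n2 m1 m2 (\<Phi> \<circ> dephase n1) (\<Theta> \<circ> dephase n2) A"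
    by (rule fun_cong[OF map_tensor_cong])
      (simp_all add: creation_incoherentD[OF \<Phi>] creation_incoherentD[OF \<Theta>])
  also have "\<dots> = map_tensor n1 n2 m1 m2 \<Phi> \<Theta> (dephase (n1 * n2) A)"
    by (rule map_tensor_dephase[OF l, symmetric])
  finally show "dephase (m1 * m2) (map_tensor n1 n2 m1 m2 \<Phi> \<Theta> (dephase (n1 * n2) A)) =
      map_tensor n1 n2 m1 m2 \<Phi> \<Theta> (dephase (n1 * n2) A)" .
qed

lemma free_op_comp:
  "free_op K n m \<Phi> \<Longrightarrow> free_op K l n \<Theta> \<Longrightarrow> free_op K l m (\<Phi> \<circ> \<Theta>)"
  by (cases K) (auto simp: detection_creation_incoherent_iff
      intro: detection_incoherent_comp creation_incoherent_comp)

lemma free_op_map_tensor: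
  "free_op K n1 m1 \<Phi> \<Longrightarrow> free_op K n2 m2 \<Theta> \<Longrightarrow>
    free_op K (n1 * n2) (m1 * m2) (map_tensor n1 n2 m1 m2 \<Phi> \<Theta>)"
  by (cases K) (auto simp: detection_creation_incoherent_iff
      intro: detection_incoherent_map_tensor creation_incoherent_map_tensor)

theorem lemma11:
  fixes K :: free_kind
    and \<Phi> \<Theta> :: "complex mat \<Rightarrow> complex mat"
  shows "(\<forall>l n m. free_op K n m \<Phi> \<and> free_op K l n \<Theta> \<longrightarrow> free_op K l m (\<Phi> \<circ> \<Theta>)) \<and>
         (\<forall>n1 m1 n2 m2. free_op K n1 m1 \<Phi> \<and> free_op K n2 m2 \<Theta> \<longrightarrow>
            free_op K (n1 * n2) (m1 * m2) (map_tensor n1 n2 m1 m2 \<Phi> \<Theta>))"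
  using free_op_comp free_op_map_tensor by blast

end
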